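(* If $H\in(\frac12,1)$ then $$\lim_{s\downarrow0}s^{H-\frac12}K^0_H(1,s)=\frac{c_2(H)}{2}\quad\text{and}\quad\lim_{t\to\infty}t^{1-2H}K^0_H(t,s)=\frac{c_2(H)}2s^{\frac12-H}\ \ (s>0).$$ If $H\in(0,\frac12)$ then $$\lim_{s\downarrow0}s^{\frac12-H}K^0_H(1,s)=\frac{H}{c_2(H)}\quad\text{and}\quad\lim_{t\to\infty}K^0_H(t,s)=\frac{H}{c_2(H)}s^{H-\frac12}\ \ (s>0).$$
   Context: Let $c_2(H)=\big(\frac{2H\Gamma(\frac32-H)}{\Gamma(H+\frac12)\Gamma(2-2H)}\big)^{1/2}$. For $H\in(0,1)\setminus\{\frac12\}$ and $t>s>0$, $$K^0_H(t,s)=c_2(H)\Big[\big(\tfrac ts\big)^{H-\frac12}(t-s)^{H-\frac12}-\big(H-\tfrac12\big)s^{\frac12-H}\int_s^tu^{H-\frac32}(u-s)^{H-\frac12}du\Big],$$ which for $H>\frac12$ equals $(H-\frac12)c_2(H)s^{\frac12-H}\int_s^tu^{H-\frac12}(u-s)^{H-\frac32}du$. *)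

theory Defs
  imports "HOL-Analysis.Analysis"
begin

definition c2 :: "real \<Rightarrow> real" where
  "c2 H = sqrt (2 * H * Gamma (3/2 - H) / (Gamma (H + 1/2) * Gamma (2 - 2*H)))"

text \<open>The kernel K^0_H(t,s) for t > s > 0, H in (0,1) minus {1/2}; the integral is the
  (absolutely convergent) Henstock-Kurzweil integral over [s,t].\<close>
definition K0 :: "real \<Rightarrow> real \<Rightarrow> real \<Rightarrow> real" where
  "K0 H t s = c2 H * ((t / s) powr (H - 1/2) * (t - s) powr (H - 1/2)
     - (H - 1/2) * s powr (1/2 - H) *
       integral {s..t} (\<lambda>u. u powr (H - 3/2) * (u - s) powr (H - 1/2)))"

end

theory Submission
  imports Defs "HOL-Real_Asymp.Real_Asymp"
begin

text \<open>Write a = H - 1/2 and I(s,t) = \<integral>_s^t u^(a-1) (u - s)^a du, so that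
  K0 H t s = c2 H ((t/s)^a (t - s)^a - a s^(-a) I(s,t)).
  For 0 < a < 1/2 the integrand lies between u^(2a-1) - s u^(2a-2) and u^(2a-1), which squeezes
  I(s,t) to within s^(2a)/(1 - 2a) of (t^(2a) - s^(2a))/(2a).
  For -1 < a < 0 the substitution u = s/w turns I(s,t) into s^(2a) \<integral>_(s/t)^1 w^(-2a-1) (1 - w)^a dw,
  an incomplete Beta integral tending to B(-2a, a + 1) as s/t \<rightarrow> 0; the constant H / c2 H then
  comes from \<Gamma>(2 - 2H) = (1 - 2H) \<Gamma>(1 - 2H).\<close>

definition kernel_integral :: "real \<Rightarrow> real \<Rightarrow> real \<Rightarrow> real" where
  "kernel_integral a s t = integral {s..t} (\<lambda>u. u powr (a - 1) * (u - s) powr a)"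

lemma has_integral_powr_shifted:
  fixes c s t e :: real
  assumes "c \<le> s" "s \<le> t" "e \<noteq> -1" "c < s \<or> -1 < e"
  shows "((\<lambda>u. (u - c) powr e) has_integral
           ((t - c) powr (e + 1) - (s - c) powr (e + 1)) / (e + 1)) {s..t}"
proof -
  have "((\<lambda>u. (u - c) powr e) has_integral
          (t - c) powr (e + 1) / (e + 1) - (s - c) powr (e + 1) / (e + 1)) {s..t}"
  proof (rule fundamental_theorem_of_calculus_interior)
    show "continuous_on {s..t} (\<lambda>u. (u - c) powr (e + 1) / (e + 1))"
      using assms by (intro continuous_on_divide continuous_on_powr' continuous_intros) auto
    show "((\<lambda>u. (u - c) powr (e + 1) / (e + 1)) has_vector_derivative (x - c) powr e) (at x)"
      if "x \<in> {s<..<t}" for x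
      unfolding has_real_derivative_iff_has_vector_derivative[symmetric]
      using that assms by (auto intro!: derivative_eq_intros)
  qed (use assms in auto)
  then show ?thesis by (simp add: diff_divide_distrib)
qed

lemma kernel_integrable:
  fixes s t a :: real
  assumes "0 < s" "s \<le> t" "-1 < a" "a \<le> 1"
  shows "(\<lambda>u. u powr (a - 1) * (u - s) powr a) integrable_on {s..t}"
proof (rule measurable_bounded_by_integrable_imp_integrable_real)
  show "(\<lambda>u. u powr (a - 1) * (u - s) powr a) \<in> borel_measurable (lebesgue_on {s..t})"
    by (intro measurable_restrict_space1 measurable_completion) measurable
  show "(\<lambda>u. s powr (a - 1) * (u - s) powr a) integrable_on {s..t}"
  proof -
    have "((\<lambda>u. (u - s) powr a) has_integral (t - s) powr (a + 1) / (a + 1)) {s..t}"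
      using has_integral_powr_shifted[of s s t a] assms by simp
    from has_integral_mult_right[OF this, of "s powr (a - 1)"] show ?thesis
      by (auto simp: integrable_on_def)
  qed
  show "\<bar>u powr (a - 1) * (u - s) powr a\<bar> \<le> s powr (a - 1) * (u - s) powr a" if "u \<in> {s..t}" for u
  proof -
    have "u powr (a - 1) \<le> s powr (a - 1)"
      using that assms by (intro powr_mono2') auto
    then show ?thesis by (simp add: abs_mult mult_right_mono)
  qed
qed auto

lemma kernel_substitution_integrand:
  fixes s w a :: real
  assumes "0 < s" "0 < w" "w \<le> 1"
  shows "s / w\<^sup>2 * ((s / w) powr (a - 1) * (s / w - s) powr a)
       = s powr (2 * a) * (w powr (- 2 * a - 1) * (1 - w) powr a)"
proof -
  have "s / w - s = s * (1 - w) / w" using assms by (simp add: field_simps)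
  then have "(s / w - s) powr a = s powr a * (1 - w) powr a * w powr (- a)"
    using assms by (simp add: powr_divide powr_mult powr_minus_divide)
  moreover have "(s / w) powr (a - 1) = s powr (a - 1) * w powr (1 - a)"
    using assms powr_minus_divide[of w "a - 1"] by (simp add: powr_divide)
  moreover have "s / w\<^sup>2 = s * w powr (- 2)"
    using assms by (simp add: powr_minus_divide)
  ultimately have "s / w\<^sup>2 * ((s / w) powr (a - 1) * (s / w - s) powr a)
      = (s * s powr (a - 1) * s powr a) * (w powr (- 2) * w powr (1 - a) * w powr (- a)) * (1 - w) powr a"
    by (simp add: algebra_simps)
  also have "s * s powr (a - 1) * s powr a = s powr (2 * a)"
    using assms by (simp add: powr_mult_base powr_add[symmetric])
  also have "w powr (- 2) * w powr (1 - a) * w powr (- a) = w powr (- 2 * a - 1)"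
    using assms by (simp add: powr_add[symmetric])
  finally show ?thesis by (simp add: algebra_simps)
qed

lemma image_divide_left_Icc:
  fixes c x y :: real
  assumes "0 < c" "0 < x" "x \<le> y"
  shows "(\<lambda>w. c / w) ` {c/y..c/x} = {x..y}"
proof -
  have "c / w \<in> {x..y}" if w: "w \<in> {c/y..c/x}" for w
  proof -
    have "0 < w" using w assms by (auto intro: less_le_trans[of 0 "c / y"])
    then show ?thesis using w assms by (simp add: le_divide_eq divide_le_eq mult.commute)
  qed
  moreover have "u \<in> (\<lambda>w. c / w) ` {c/y..c/x}" if u: "u \<in> {x..y}" for u
  proof (rule image_eqI)
    show "u = c / (c / u)" using assms by simp
    show "c / u \<in> {c/y..c/x}" using u assms by (auto intro: divide_left_mono)
  qed
  ultimately show ?thesis by blast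
qed

lemma kernel_integral_eq_incomplete_Beta:
  fixes s t a :: real
  assumes "0 < s" "s \<le> t" "-1 < a" "a \<le> 1"
  shows "kernel_integral a s t
       = s powr (2 * a) * integral {s/t..1} (\<lambda>w. w powr (- 2 * a - 1) * (1 - w) powr a)"
proof -
  define f where "f u = u powr (a - 1) * (u - s) powr a" for u
  have t: "0 < t" using assms by simp
  have w_pos: "0 < w" if "w \<in> {s/t..1}" for w
    using that divide_pos_pos[OF assms(1) t] by auto
  have image: "(\<lambda>w. s / w) ` {s/t..1} = {s..t}"
    using image_divide_left_Icc[of s s t] assms by simp
  have f_integrable: "f absolutely_integrable_on {s..t}"
    unfolding f_def using assms
    by (intro nonnegative_absolutely_integrable_1 kernel_integrable) auto
  have "(\<lambda>w. \<bar>- s / w\<^sup>2\<bar> * f (s / w)) absolutely_integrable_on {s/t..1} \<and>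
      integral {s/t..1} (\<lambda>w. \<bar>- s / w\<^sup>2\<bar> * f (s / w)) = kernel_integral a s t"
  proof (intro has_absolute_integral_change_of_variables_1'
      [where g = "\<lambda>w. s / w" and g' = "\<lambda>w. - s / w\<^sup>2" and f = f, THEN iffD2])
    show "{s/t..1} \<in> sets lebesgue"
      by (metis box_real(2) fmeasurableD lmeasurable_cbox)
    show "((\<lambda>w. s / w) has_field_derivative - s / w\<^sup>2) (at w within {s/t..1})"
      if "w \<in> {s/t..1}" for w
    proof -
      have "w \<noteq> 0" using w_pos[OF that] by simp
      then have "((\<lambda>w. s / w) has_field_derivative - s / w\<^sup>2) (at w)"
        by (auto intro!: derivative_eq_intros simp: power2_eq_square)
      then show ?thesis by (rule has_field_derivative_at_within)
    qed
    show "inj_on (\<lambda>w. s / w) {s/t..1}"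
      using assms(1) by (intro inj_onI) simp
    show "f absolutely_integrable_on (\<lambda>w. s / w) ` {s/t..1} \<and>
        integral ((\<lambda>w. s / w) ` {s/t..1}) f = kernel_integral a s t"
      unfolding image kernel_integral_def f_def[abs_def, symmetric] using f_integrable by simp
  qed
  then have "integral {s/t..1} (\<lambda>w. \<bar>- s / w\<^sup>2\<bar> * f (s / w)) = kernel_integral a s t"
    by blast
  also have "integral {s/t..1} (\<lambda>w. \<bar>- s / w\<^sup>2\<bar> * f (s / w))
           = integral {s/t..1} (\<lambda>w. s powr (2 * a) * (w powr (- 2 * a - 1) * (1 - w) powr a))"
  proof (intro integral_cong)
    fix w assume w: "w \<in> {s/t..1}"
    have "\<bar>- s / w\<^sup>2\<bar> * f (s / w) = s / w\<^sup>2 * ((s / w) powr (a - 1) * (s / w - s) powr a)"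
      using assms(1) by (simp add: f_def)
    also have "\<dots> = s powr (2 * a) * (w powr (- 2 * a - 1) * (1 - w) powr a)"
      using w w_pos[OF w] assms(1) by (intro kernel_substitution_integrand) auto
    finally show "\<bar>- s / w\<^sup>2\<bar> * f (s / w) = s powr (2 * a) * (w powr (- 2 * a - 1) * (1 - w) powr a)" .
  qed
  finally show ?thesis by simp
qed

lemma tendsto_integral_Beta_tail:
  fixes p q :: real
  assumes "0 < p" "0 < q"
  shows "((\<lambda>x. integral {x..1} (\<lambda>w. w powr (p - 1) * (1 - w) powr (q - 1))) \<longlongrightarrow> Beta p q)
           (at_right 0)"
proof -
  have Beta: "((\<lambda>w. w powr (p - 1) * (1 - w) powr (q - 1)) has_integral Beta p q) {0..1}"
    using has_integral_Beta_real[OF assms] .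
  have "continuous_on {0..1} (\<lambda>x. integral {x..1} (\<lambda>w. w powr (p - 1) * (1 - w) powr (q - 1)))"
    using Beta by (intro indefinite_integral_continuous_1') blast
  then have "((\<lambda>x. integral {x..1} (\<lambda>w. w powr (p - 1) * (1 - w) powr (q - 1)))
               \<longlongrightarrow> integral {0..1} (\<lambda>w. w powr (p - 1) * (1 - w) powr (q - 1))) (at 0 within {0..1})"
    unfolding continuous_on_def by simp
  then show ?thesis
    using integral_unique[OF Beta] by (simp add: at_within_Icc_at_right)
qed

lemma kernel_integrand_le:
  fixes s u a :: real
  assumes "0 < s" "s \<le> u" "0 \<le> a"
  shows "u powr (a - 1) * (u - s) powr a \<le> u powr (2 * a - 1)"
proof -
  have "u powr (a - 1) * (u - s) powr a \<le> u powr (a - 1) * u powr a"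
    using assms by (intro mult_left_mono powr_mono2) auto
  also have "\<dots> = u powr (2 * a - 1)"
    using assms by (simp add: powr_add[symmetric])
  finally show ?thesis .
qed

lemma kernel_integrand_ge:
  fixes s u a :: real
  assumes "0 < s" "s \<le> u" "a \<le> 1"
  shows "u powr (2 * a - 1) - s * u powr (2 * a - 2) \<le> u powr (a - 1) * (u - s) powr a"
proof -
  have "u powr (2 * a - 1) - s * u powr (2 * a - 2) = u powr (a - 1) * ((u - s) * u powr (a - 1))"
    using assms by (simp add: algebra_simps powr_add[symmetric] powr_mult_base)
  also have "\<dots> \<le> u powr (a - 1) * (u - s) powr a"
  proof (cases "u = s")
    case False
    then have "(u - s) * u powr (a - 1) \<le> (u - s) * (u - s) powr (a - 1)"
      using assms by (intro mult_left_mono powr_mono2') auto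
    also have "\<dots> = (u - s) powr a"
      using assms False by (simp add: powr_mult_base)
    finally show ?thesis by (intro mult_left_mono) auto
  qed simp
  finally show ?thesis .
qed

lemma kernel_integral_le:
  fixes s t a :: real
  assumes "0 < s" "s \<le> t" "0 < a" "a \<le> 1"
  shows "kernel_integral a s t \<le> (t powr (2 * a) - s powr (2 * a)) / (2 * a)"
  unfolding kernel_integral_def
proof (rule has_integral_le[OF integrable_integral])
  show "(\<lambda>u. u powr (a - 1) * (u - s) powr a) integrable_on {s..t}"
    using assms by (intro kernel_integrable) auto
  show "((\<lambda>u. u powr (2 * a - 1)) has_integral (t powr (2 * a) - s powr (2 * a)) / (2 * a)) {s..t}"
    using has_integral_powr_shifted[of 0 s t "2 * a - 1"] assms by simp
qed (use assms kernel_integrand_le in auto)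

lemma kernel_integral_ge:
  fixes s t a :: real
  assumes "0 < s" "s \<le> t" "0 < a" "a < 1/2"
  shows "(t powr (2 * a) - s powr (2 * a)) / (2 * a) - s powr (2 * a) / (1 - 2 * a) \<le> kernel_integral a s t"
proof -
  have "(s * t powr (2 * a - 1) - s powr (2 * a)) / (2 * a - 1)
      = (s powr (2 * a) - s * t powr (2 * a - 1)) / (1 - 2 * a)"
    using assms by (simp add: field_simps)
  also have "\<dots> \<le> s powr (2 * a) / (1 - 2 * a)"
    using assms by (intro divide_right_mono) auto
  finally have "(t powr (2 * a) - s powr (2 * a)) / (2 * a) - s powr (2 * a) / (1 - 2 * a)
      \<le> (t powr (2 * a) - s powr (2 * a)) / (2 * a) - (s * t powr (2 * a - 1) - s powr (2 * a)) / (2 * a - 1)"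
    by simp
  also have "\<dots> \<le> kernel_integral a s t"
    unfolding kernel_integral_def
  proof (rule has_integral_le[OF _ integrable_integral])
    show "(\<lambda>u. u powr (a - 1) * (u - s) powr a) integrable_on {s..t}"
      using assms by (intro kernel_integrable) auto
    have "s * s powr (2 * a - 1) = s powr (2 * a)"
      using assms by (simp add: powr_mult_base)
    then show "((\<lambda>u. u powr (2 * a - 1) - s * u powr (2 * a - 2)) has_integral
        (t powr (2 * a) - s powr (2 * a)) / (2 * a)
          - (s * t powr (2 * a - 1) - s powr (2 * a)) / (2 * a - 1)) {s..t}"
      using has_integral_diff[OF has_integral_powr_shifted[of 0 s t "2 * a - 1"]
          has_integral_mult_right[OF has_integral_powr_shifted[of 0 s t "2 * a - 2"]], of s] assms
      by (simp add: right_diff_distrib)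
  qed (use assms kernel_integrand_ge in auto)
  finally show ?thesis .
qed

lemma tendsto_kernel_integral_at_right_0:
  fixes a :: real
  assumes "0 < a" "a < 1/2"
  shows "((\<lambda>s. kernel_integral a s 1) \<longlongrightarrow> 1 / (2 * a)) (at_right 0)"
proof (rule tendsto_sandwich)
  show "\<forall>\<^sub>F s in at_right 0. (1 - s powr (2 * a)) / (2 * a) - s powr (2 * a) / (1 - 2 * a)
          \<le> kernel_integral a s 1"
    using kernel_integral_ge[of _ 1 a] assms
    by (auto simp: eventually_at_right_field intro!: exI[of _ 1])
  show "\<forall>\<^sub>F s in at_right 0. kernel_integral a s 1 \<le> (1 - s powr (2 * a)) / (2 * a)"
    using kernel_integral_le[of _ 1 a] assms
    by (auto simp: eventually_at_right_field intro!: exI[of _ 1])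
  show "((\<lambda>s. (1 - s powr (2 * a)) / (2 * a) - s powr (2 * a) / (1 - 2 * a)) \<longlongrightarrow> 1 / (2 * a))
          (at_right 0)"
    using assms by (real_asymp simp: field_simps)
  show "((\<lambda>s. (1 - s powr (2 * a)) / (2 * a)) \<longlongrightarrow> 1 / (2 * a)) (at_right 0)"
    using assms by (real_asymp simp: field_simps)
qed

lemma tendsto_kernel_integral_at_top:
  fixes a s :: real
  assumes "0 < a" "a < 1/2" "0 < s"
  shows "((\<lambda>t. t powr (- 2 * a) * kernel_integral a s t) \<longlongrightarrow> 1 / (2 * a)) at_top"
proof (rule tendsto_sandwich)
  show "\<forall>\<^sub>F t in at_top. t powr (- 2 * a) * ((t powr (2 * a) - s powr (2 * a)) / (2 * a)
          - s powr (2 * a) / (1 - 2 * a)) \<le> t powr (- 2 * a) * kernel_integral a s t"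
    using eventually_ge_at_top[of s]
    by eventually_elim (intro mult_left_mono kernel_integral_ge, use assms in auto)
  show "\<forall>\<^sub>F t in at_top. t powr (- 2 * a) * kernel_integral a s t
          \<le> t powr (- 2 * a) * ((t powr (2 * a) - s powr (2 * a)) / (2 * a))"
    using eventually_ge_at_top[of s]
    by eventually_elim (intro mult_left_mono kernel_integral_le, use assms in auto)
  show "((\<lambda>t. t powr (- 2 * a) * ((t powr (2 * a) - s powr (2 * a)) / (2 * a)
          - s powr (2 * a) / (1 - 2 * a))) \<longlongrightarrow> 1 / (2 * a)) at_top"
    using assms by (real_asymp simp: field_simps)
  show "((\<lambda>t. t powr (- 2 * a) * ((t powr (2 * a) - s powr (2 * a)) / (2 * a)))
          \<longlongrightarrow> 1 / (2 * a)) at_top"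
    using assms by (real_asymp simp: field_simps)
qed

lemma tendsto_kernel_integral_Beta_at_right_0:
  fixes a :: real
  assumes "-1 < a" "a < 0"
  shows "((\<lambda>s. s powr (- 2 * a) * kernel_integral a s 1) \<longlongrightarrow> Beta (- 2 * a) (a + 1)) (at_right 0)"
proof (rule Lim_transform_eventually)
  show "((\<lambda>s. integral {s..1} (\<lambda>w. w powr (- 2 * a - 1) * (1 - w) powr a))
          \<longlongrightarrow> Beta (- 2 * a) (a + 1)) (at_right 0)"
    using tendsto_integral_Beta_tail[of "- 2 * a" "a + 1"] assms by simp
  show "\<forall>\<^sub>F s in at_right 0. integral {s..1} (\<lambda>w. w powr (- 2 * a - 1) * (1 - w) powr a)
          = s powr (- 2 * a) * kernel_integral a s 1"
    unfolding eventually_at_right_field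
    using assms by (intro exI[of _ 1])
      (auto simp: kernel_integral_eq_incomplete_Beta powr_add[symmetric])
qed

lemma tendsto_kernel_integral_Beta_at_top:
  fixes a s :: real
  assumes "-1 < a" "a < 0" "0 < s"
  shows "((\<lambda>t. kernel_integral a s t) \<longlongrightarrow> s powr (2 * a) * Beta (- 2 * a) (a + 1)) at_top"
proof (rule Lim_transform_eventually)
  have "filterlim (\<lambda>t. s / t) (at_right 0) at_top"
    using assms by real_asymp
  from filterlim_compose[OF tendsto_integral_Beta_tail[of "- 2 * a" "a + 1"] this]
  show "((\<lambda>t. s powr (2 * a) * integral {s/t..1} (\<lambda>w. w powr (- 2 * a - 1) * (1 - w) powr a))
          \<longlongrightarrow> s powr (2 * a) * Beta (- 2 * a) (a + 1)) at_top"
    using assms by (intro tendsto_mult_left) simp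
  show "\<forall>\<^sub>F t in at_top. s powr (2 * a) * integral {s/t..1} (\<lambda>w. w powr (- 2 * a - 1) * (1 - w) powr a)
          = kernel_integral a s t"
    using eventually_ge_at_top[of s]
    by eventually_elim (use assms in \<open>simp add: kernel_integral_eq_incomplete_Beta\<close>)
qed

lemma K0_eq_kernel_integral:
  assumes "a = H - 1/2"
  shows "K0 H t s = c2 H * ((t / s) powr a * (t - s) powr a - a * s powr (- a) * kernel_integral a s t)"
  unfolding K0_def kernel_integral_def assms by (simp add: algebra_simps)

lemma K0_1_eq_kernel_integral:
  assumes "a = H - 1/2" "0 < s"
  shows "s powr a * K0 H 1 s = c2 H * ((1 - s) powr a - a * kernel_integral a s 1)"
  using assms(2) unfolding K0_eq_kernel_integral[OF assms(1)]
  by (simp add: algebra_simps powr_divide powr_minus)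

lemma c2_pos: "0 < H \<Longrightarrow> H < 1 \<Longrightarrow> 0 < c2 H"
  unfolding c2_def by (intro real_sqrt_gt_zero divide_pos_pos mult_pos_pos Gamma_real_pos) auto

lemma c2_mult_Beta:
  assumes "0 < H" "H < 1/2" "a = H - 1/2"
  shows "c2 H * (- a * Beta (- 2 * a) (a + 1)) = H / c2 H"
proof -
  define A B C where "A = Gamma (1 - 2 * H)" and "B = Gamma (H + 1/2)" and "C = Gamma (3/2 - H)"
  have pos: "0 < A" "0 < B" "0 < C"
    using assms unfolding A_def B_def C_def by auto
  have "1 - 2 * H \<notin> \<int>\<^sub>\<le>\<^sub>0"
    using assms by auto
  then have "Gamma (2 - 2 * H) = (1 - 2 * H) * A"
    using Gamma_plus1[of "1 - 2 * H"] unfolding A_def by (simp add: algebra_simps)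
  then have c2_sq: "(c2 H)\<^sup>2 = 2 * H * C / (B * ((1 - 2 * H) * A))"
    unfolding c2_def C_def[symmetric] B_def[symmetric] using assms pos
    by (subst real_sqrt_pow2) (auto intro!: divide_nonneg_pos mult_pos_pos)
  have "Beta (- 2 * a) (a + 1) = A * B / C"
    unfolding Beta_def A_def B_def C_def assms(3) by (simp add: algebra_simps)
  moreover have "- a = 1/2 - H" using assms(3) by simp
  ultimately have "c2 H * (c2 H * (- a * Beta (- 2 * a) (a + 1)))
      = (c2 H)\<^sup>2 * ((1/2 - H) * (A * B / C))"
    by (simp add: power2_eq_square)
  also have "\<dots> = H"
    unfolding c2_sq using pos assms by (simp add: field_simps)
  finally have "c2 H * (c2 H * (- a * Beta (- 2 * a) (a + 1))) = H" .
  then show ?thesis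
    using c2_pos[of H] assms(1,2) by (simp add: field_simps)
qed


lemma tendsto_K0_at_right_0_gt:
  assumes "1/2 < H" "H < 1"
  shows "((\<lambda>s. s powr (H - 1/2) * K0 H 1 s) \<longlongrightarrow> c2 H / 2) (at_right 0)"
proof (rule Lim_transform_eventually)
  define a where "a = H - 1/2"
  have a: "0 < a" "a < 1/2" using assms unfolding a_def by auto
  have "((\<lambda>s. c2 H * ((1 - s) powr a - a * kernel_integral a s 1))
          \<longlongrightarrow> c2 H * ((1 - 0) powr a - a * (1 / (2 * a)))) (at_right 0)"
    using a by (intro tendsto_intros tendsto_kernel_integral_at_right_0 tendsto_ident_at) auto
  then show "((\<lambda>s. c2 H * ((1 - s) powr a - a * kernel_integral a s 1)) \<longlongrightarrow> c2 H / 2) (at_right 0)"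
    using a by simp
  show "\<forall>\<^sub>F s in at_right 0. c2 H * ((1 - s) powr a - a * kernel_integral a s 1)
          = s powr (H - 1/2) * K0 H 1 s"
    using eventually_at_right_less[of 0] 
    by eventually_elim (simp add: K0_1_eq_kernel_integral a_def)
qed


lemma tendsto_K0_at_top_gt:
  assumes "1/2 < H" "H < 1" "0 < s"
  shows "((\<lambda>t. t powr (1 - 2 * H) * K0 H t s) \<longlongrightarrow> c2 H / 2 * s powr (1/2 - H)) at_top"
proof (rule Lim_transform_eventually)
  define a where "a = H - 1/2"
  have a: "0 < a" "a < 1/2" using assms unfolding a_def by auto
  have exponents: "1 - 2 * H = - 2 * a" "1/2 - H = - a" unfolding a_def by simp_all
  have "((\<lambda>t. t powr (- 2 * a) * ((t / s) powr a * (t - s) powr a)) \<longlongrightarrow> s powr (- a)) at_top"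
    using assms by (real_asymp simp: inverse_powr powr_minus)
  from tendsto_mult_left[OF tendsto_diff[OF this
        tendsto_mult_left[OF tendsto_kernel_integral_at_top[OF a assms(3)], of "a * s powr (- a)"]], of "c2 H"]
  show "((\<lambda>t. c2 H * (t powr (- 2 * a) * ((t / s) powr a * (t - s) powr a)
          - a * s powr (- a) * (t powr (- 2 * a) * kernel_integral a s t)))
          \<longlongrightarrow> c2 H / 2 * s powr (1/2 - H)) at_top"
    using a by (simp add: exponents)
  show "\<forall>\<^sub>F t in at_top. c2 H * (t powr (- 2 * a) * ((t / s) powr a * (t - s) powr a)
          - a * s powr (- a) * (t powr (- 2 * a) * kernel_integral a s t))
          = t powr (1 - 2 * H) * K0 H t s"
    unfolding K0_eq_kernel_integral[OF a_def] exponents by (simp add: algebra_simps)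
qed

lemma tendsto_K0_at_right_0_lt:
  assumes "0 < H" "H < 1/2"
  shows "((\<lambda>s. s powr (1/2 - H) * K0 H 1 s) \<longlongrightarrow> H / c2 H) (at_right 0)"
proof (rule Lim_transform_eventually)
  define a where "a = H - 1/2"
  have a: "-1 < a" "a < 0" using assms unfolding a_def by auto
  have "((\<lambda>s. s powr (- 2 * a) * (1 - s) powr a) \<longlongrightarrow> 0) (at_right 0)"
    using a by real_asymp
  from tendsto_mult_left[OF tendsto_diff[OF this
        tendsto_mult_left[OF tendsto_kernel_integral_Beta_at_right_0[OF a], of a]], of "c2 H"]
  have "((\<lambda>s. c2 H * (s powr (- 2 * a) * (1 - s) powr a - a * (s powr (- 2 * a) * kernel_integral a s 1)))
          \<longlongrightarrow> c2 H * (0 - a * Beta (- 2 * a) (a + 1))) (at_right 0)" .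
  moreover have "c2 H * (0 - a * Beta (- 2 * a) (a + 1)) = H / c2 H"
    using c2_mult_Beta[OF assms a_def] by simp
  ultimately show "((\<lambda>s. c2 H * (s powr (- 2 * a) * (1 - s) powr a
          - a * (s powr (- 2 * a) * kernel_integral a s 1))) \<longlongrightarrow> H / c2 H) (at_right 0)"
    by simp
  show "\<forall>\<^sub>F s in at_right 0. c2 H * (s powr (- 2 * a) * (1 - s) powr a
          - a * (s powr (- 2 * a) * kernel_integral a s 1)) = s powr (1/2 - H) * K0 H 1 s"
  proof (rule eventually_mono[OF eventually_at_right_less[of 0]])
    fix s :: real assume s: "0 < s"
    have "s powr (1/2 - H) = s powr (- 2 * a) * s powr a"
      unfolding a_def by (simp add: powr_add[symmetric])
    then have "s powr (1/2 - H) * K0 H 1 s = s powr (- 2 * a) * (s powr a * K0 H 1 s)"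
      by simp
    also have "\<dots> = c2 H * (s powr (- 2 * a) * (1 - s) powr a - a * (s powr (- 2 * a) * kernel_integral a s 1))"
      unfolding K0_1_eq_kernel_integral[OF a_def s] by (simp add: algebra_simps)
    finally show "c2 H * (s powr (- 2 * a) * (1 - s) powr a
        - a * (s powr (- 2 * a) * kernel_integral a s 1)) = s powr (1/2 - H) * K0 H 1 s"
      by simp
  qed
qed

lemma tendsto_K0_at_top_lt:
  assumes "0 < H" "H < 1/2" "0 < s"
  shows "((\<lambda>t. K0 H t s) \<longlongrightarrow> H / c2 H * s powr (H - 1/2)) at_top"
proof (rule Lim_transform_eventually)
  define a where "a = H - 1/2"
  have a: "-1 < a" "a < 0" using assms unfolding a_def by auto
  have "((\<lambda>t. (t / s) powr a * (t - s) powr a) \<longlongrightarrow> 0) at_top"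
    using a assms by real_asymp
  from tendsto_mult_left[OF tendsto_diff[OF this
        tendsto_mult_left[OF tendsto_kernel_integral_Beta_at_top[OF a assms(3)], of "a * s powr (- a)"]], of "c2 H"]
  have "((\<lambda>t. c2 H * ((t / s) powr a * (t - s) powr a - a * s powr (- a) * kernel_integral a s t))
          \<longlongrightarrow> c2 H * (0 - a * s powr (- a) * (s powr (2 * a) * Beta (- 2 * a) (a + 1)))) at_top" .
  moreover have "c2 H * (0 - a * s powr (- a) * (s powr (2 * a) * Beta (- 2 * a) (a + 1)))
      = H / c2 H * s powr (H - 1/2)"
  proof -
    have "s powr (- a) * s powr (2 * a) = s powr a"
      by (simp add: powr_add[symmetric])
    then have "c2 H * (0 - a * s powr (- a) * (s powr (2 * a) * Beta (- 2 * a) (a + 1)))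
        = c2 H * (- a * Beta (- 2 * a) (a + 1)) * s powr a"
      by (simp add: algebra_simps)
    then show ?thesis
      using c2_mult_Beta[OF assms(1,2) a_def] unfolding a_def by simp
  qed
  ultimately show "((\<lambda>t. c2 H * ((t / s) powr a * (t - s) powr a - a * s powr (- a) * kernel_integral a s t))
          \<longlongrightarrow> H / c2 H * s powr (H - 1/2)) at_top"
    by simp
  show "\<forall>\<^sub>F t in at_top. c2 H * ((t / s) powr a * (t - s) powr a - a * s powr (- a) * kernel_integral a s t)
          = K0 H t s"
    by (simp add: K0_eq_kernel_integral[OF a_def])
qed

theorem lemma6p7:
  fixes H :: real
  shows "(1/2 < H \<and> H < 1 \<longrightarrow>
           ((\<lambda>s. s powr (H - 1/2) * K0 H 1 s) \<longlongrightarrow> c2 H / 2) (at_right 0) \<and>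
           (\<forall>s>0. ((\<lambda>t. t powr (1 - 2*H) * K0 H t s) \<longlongrightarrow> c2 H / 2 * s powr (1/2 - H)) at_top))
       \<and> (0 < H \<and> H < 1/2 \<longrightarrow>
           ((\<lambda>s. s powr (1/2 - H) * K0 H 1 s) \<longlongrightarrow> H / c2 H) (at_right 0) \<and>
           (\<forall>s>0. ((\<lambda>t. K0 H t s) \<longlongrightarrow> H / c2 H * s powr (H - 1/2)) at_top))"
  using tendsto_K0_at_right_0_gt tendsto_K0_at_top_gt tendsto_K0_at_right_0_lt tendsto_K0_at_top_lt
  by blast

end
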